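(* Let $\Lambda\subset\mathbb{R}^2$ be a lattice invariant under $\mathrm{diag}(e^a,e^{-a})$ for some $a\neq0$ (so that $\Gamma=\Lambda\rtimes a\mathbb{Z}$ is a lattice in $\mathsf{Solv}$), and let $\Lambda'=\{\underline{\mu}\in\mathbb{R}^2:\underline{\mu}\cdot m\in2\pi\mathbb{Z}\ \forall m\in\Lambda\}$ be its dual lattice. For $\underline{\mu}=(\mu,\mu')\in\Lambda'\setminus\{0\}$ consider the operator $\Delta_{\underline{\mu}}f=-f_{zz}+(\mu^2e^{-2z}+(\mu')^2e^{2z})f$ on $L^2(\mathbb{R})$. Then the first eigenvalue of $\Delta_{\underline{\mu}}$ is at least $2|\mu\mu'|$, and $2|\mu\mu'|\neq0$.
   Context: $\mathsf{Solv}$ is $\mathbb{R}^2\rtimes\mathbb{R}$ with $z\in\mathbb{R}$ acting on $\mathbb{R}^2$ by $\mathrm{diag}(e^z,e^{-z})$, with left-invariant metric $e^{2z}dx^2+e^{-2z}dy^2+dz^2$. The operators $\Delta_{\underline{\mu}}$ are the Fourier components of the Laplacian on functions on $\Gamma\backslash\mathsf{Solv}$ with respect to the $\mathbb{R}^2$-directions. *)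

theory Defs
  imports "HOL-Analysis.Analysis"
begin

definition is_lattice :: "(real \<times> real) set \<Rightarrow> bool" where
  "is_lattice L \<longleftrightarrow> (\<exists>v w. fst v * snd w - snd v * fst w \<noteq> 0 \<and>
      L = {(of_int m * fst v + of_int n * fst w, of_int m * snd v + of_int n * snd w) | m n :: int. True})"

definition diag_exp :: "real \<Rightarrow> real \<times> real \<Rightarrow> real \<times> real" where
  "diag_exp a p = (exp a * fst p, exp (- a) * snd p)"

definition dual_lattice :: "(real \<times> real) set \<Rightarrow> (real \<times> real) set" where
  "dual_lattice L = {u. \<forall>m\<in>L. \<exists>k::int. fst u * fst m + snd u * snd m = 2 * pi * of_int k}"

definition solv_potential :: "real \<Rightarrow> real \<Rightarrow> real \<Rightarrow> real" where
  "solv_potential \<mu> \<mu>' z = \<mu>\<^sup>2 * exp (- 2 * z) + \<mu>'\<^sup>2 * exp (2 * z)"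

definition is_eigenpair :: "real \<Rightarrow> real \<Rightarrow> real \<Rightarrow> (real \<Rightarrow> complex) \<Rightarrow> bool" where
  "is_eigenpair \<mu> \<mu>' lam f \<longleftrightarrow>
     (\<exists>z. f z \<noteq> 0) \<and>
     f \<in> borel_measurable lborel \<and>
     integrable lborel (\<lambda>z. (cmod (f z))\<^sup>2) \<and>
     (\<exists>f'. \<forall>z. (f has_vector_derivative f' z) (at z) \<and>
        (f' has_vector_derivative (complex_of_real (solv_potential \<mu> \<mu>' z - lam) * f z)) (at z))"

end

(*
  If lam were at most the potential V everywhere, an eigenfunction f would satisfy
  (|f|^2)'' = 2 |f'|^2 + 2 (V - lam) |f|^2 >= 0, so |f|^2 would be convex; but a convex
  integrable function on the real line is nowhere positive.  Hence every eigenvalue exceeds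
  some value of V, and V >= 2 |mu mu'| by AM-GM.

  For the nonvanishing of mu mu': if mu = 0, pair (0, mu') with the lattice vectors
  diag(e^(n|a|), e^(-n|a|)) m.  The values e^(-n|a|) mu' m_2 lie in 2 pi Z and tend to 0,
  so they eventually vanish, forcing mu' = 0 once m_2 <> 0.  The case mu' = 0 is symmetric.
*)
theory Submission
  imports Defs
begin

lemma integrable_lower_bound_on_long_intervals_nonpos:
  fixes g :: "real \<Rightarrow> real"
  assumes g: "integrable lborel g"
    and long: "\<And>T. \<exists>a. \<forall>x\<in>{a..a + T}. c \<le> g x"
  shows "c \<le> 0"
proof (rule ccontr)
  assume "\<not> c \<le> 0"
  define T where "T = (\<integral>x. \<bar>g x\<bar> \<partial>lborel) / c + 1"
  obtain a where a: "\<And>x. x \<in> {a..a + T} \<Longrightarrow> c \<le> g x"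
    using long by blast
  have "0 \<le> (\<integral>x. \<bar>g x\<bar> \<partial>lborel)"
    by (simp add: integral_nonneg)
  then have "T > 0"
    using \<open>\<not> c \<le> 0\<close> by (simp add: T_def add_nonneg_pos)
  have "c * T = (\<integral>x. c * indicator {a..a + T} x \<partial>lborel)"
    using \<open>T > 0\<close> by simp
  also have "\<dots> \<le> (\<integral>x. \<bar>g x\<bar> \<partial>lborel)"
  proof (rule integral_mono)
    show "integrable lborel (\<lambda>x. c * indicator {a..a + T} x)"
      using \<open>T > 0\<close> by (intro integrable_mult_right) (simp add: integrable_indicator_iff)
    show "integrable lborel (\<lambda>x. \<bar>g x\<bar>)"
      using g by simp
    show "c * indicator {a..a + T} x \<le> \<bar>g x\<bar>" for x
      using a[of x] \<open>\<not> c \<le> 0\<close> by (auto simp: indicator_def)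
  qed
  finally show False
    using \<open>\<not> c \<le> 0\<close> by (simp add: T_def distrib_left)
qed

lemma integrable_convex_nonpos:
  fixes g g' :: "real \<Rightarrow> real"
  assumes g: "integrable lborel g"
    and deriv: "\<And>z. (g has_real_derivative g' z) (at z)"
    and mono: "mono g'"
  shows "g z \<le> 0"
proof (rule integrable_lower_bound_on_long_intervals_nonpos[OF g])
  fix T
  show "\<exists>a. \<forall>x\<in>{a..a + T}. g z \<le> g x"
  proof (cases "g' z \<ge> 0")
    case True
    have "g z \<le> g x" if "z \<le> x" for x
      using True monoD[OF mono] by (intro deriv_nonneg_imp_mono[OF deriv _ that]) force
    then show ?thesis
      by (intro exI[of _ z]) auto
  next
    case False
    have "g z \<le> g x" if "x \<le> z" for x
      using False monoD[OF mono] by (intro deriv_nonpos_imp_antimono[OF deriv _ that]) force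
    then show ?thesis
      by (intro exI[of _ "z - T"]) auto
  qed
qed

lemma has_real_derivative_cmod_power2:
  fixes f :: "real \<Rightarrow> complex"
  assumes "(f has_vector_derivative f') (at z)"
  shows "((\<lambda>z. (cmod (f z))\<^sup>2) has_real_derivative 2 * Re (cnj (f z) * f')) (at z)"
proof -
  have norm_sq: "(cmod w)\<^sup>2 = Re (cnj w * w)" for w
    unfolding cmod_power2 by (simp add: power2_eq_square)
  have "((\<lambda>z. Re (cnj (f z) * f z)) has_real_derivative Re (cnj (f z) * f' + cnj f' * f z)) (at z)"
    by (intro has_field_derivative_Re has_vector_derivative_mult has_vector_derivative_cnj assms)
  then show ?thesis
    by (simp add: norm_sq algebra_simps)
qed

lemma schroedinger_cmod_power2_deriv_mono:
  fixes f f' :: "real \<Rightarrow> complex" and W :: "real \<Rightarrow> real"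
  assumes f': "\<And>z. (f has_vector_derivative f' z) (at z)"
    and f'': "\<And>z. (f' has_vector_derivative complex_of_real (W z) * f z) (at z)"
    and W: "\<And>z. W z \<ge> 0"
  shows "mono (\<lambda>z. 2 * Re (cnj (f z) * f' z))"
proof (rule monoI)
  have "((\<lambda>z. 2 * Re (cnj (f z) * f' z)) has_real_derivative
      2 * Re (cnj (f z) * (complex_of_real (W z) * f z) + cnj (f' z) * f' z)) (at z)" for z
    by (intro DERIV_cmult has_field_derivative_Re has_vector_derivative_mult
        has_vector_derivative_cnj f' f'')
  moreover have "Re (cnj (f z) * (complex_of_real (W z) * f z) + cnj (f' z) * f' z) =
      (cmod (f' z))\<^sup>2 + W z * (cmod (f z))\<^sup>2" for z
    unfolding cmod_power2 by (simp add: power2_eq_square algebra_simps)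
  ultimately show "2 * Re (cnj (f x) * f' x) \<le> 2 * Re (cnj (f y) * f' y)" if "x \<le> y" for x y
    using W by (intro deriv_nonneg_imp_mono[OF _ _ that]) auto
qed

lemma eigenvalue_exceeds_solv_potential:
  assumes "is_eigenpair \<mu> \<mu>' lam f"
  shows "\<exists>z. solv_potential \<mu> \<mu>' z < lam"
proof (rule ccontr)
  assume "\<nexists>z. solv_potential \<mu> \<mu>' z < lam"
  then have W: "solv_potential \<mu> \<mu>' z - lam \<ge> 0" for z
    by (simp add: not_less)
  obtain z0 f' where "f z0 \<noteq> 0"
    and int: "integrable lborel (\<lambda>z. (cmod (f z))\<^sup>2)"
    and f': "\<And>z. (f has_vector_derivative f' z) (at z)"
    and f'': "\<And>z. (f' has_vector_derivative
      complex_of_real (solv_potential \<mu> \<mu>' z - lam) * f z) (at z)"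
    using assms unfolding is_eigenpair_def by blast
  have "mono (\<lambda>z. 2 * Re (cnj (f z) * f' z))"
    using schroedinger_cmod_power2_deriv_mono[OF f' f'' W] .
  then have "(cmod (f z0))\<^sup>2 \<le> 0"
    using integrable_convex_nonpos[OF int has_real_derivative_cmod_power2[OF f']] by blast
  with \<open>f z0 \<noteq> 0\<close> show False
    by simp
qed

lemma solv_potential_ge: "2 * \<bar>\<mu> * \<mu>'\<bar> \<le> solv_potential \<mu> \<mu>' z"
proof -
  have "exp (- z) * exp z = 1"
    by (simp flip: exp_add)
  moreover have "exp (- 2 * z) = (exp (- z))\<^sup>2" "exp (2 * z) = (exp z)\<^sup>2"
    by (simp_all add: power2_eq_square flip: exp_add)
  ultimately have "solv_potential \<mu> \<mu>' z - 2 * \<bar>\<mu> * \<mu>'\<bar> = (\<bar>\<mu>\<bar> * exp (- z) - \<bar>\<mu>'\<bar> * exp z)\<^sup>2"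
    unfolding solv_potential_def by (simp add: power2_eq_square algebra_simps abs_mult)
  then show ?thesis
    by (metis diff_ge_0_iff_ge zero_le_power2)
qed

lemma diag_exp_diag_exp: "diag_exp a (diag_exp b p) = diag_exp (a + b) p"
  by (simp add: diag_exp_def mult.assoc flip: exp_add)

lemma diag_exp_image_uminus:
  assumes "diag_exp a ` L = L"
  shows "diag_exp (- a) ` L = L"
proof -
  have "diag_exp (- a) ` diag_exp a ` L = L"
    by (simp add: image_image diag_exp_diag_exp) (simp add: diag_exp_def)
  then show ?thesis
    using assms by simp
qed

lemma diag_exp_image_nat_mult:
  assumes "diag_exp a ` L = L"
  shows "diag_exp (real n * a) ` L = L"
proof (induction n)
  case 0
  then show ?case
    by (simp add: diag_exp_def)
next
  case (Suc n)
  have "diag_exp (real (Suc n) * a) ` L = diag_exp a ` diag_exp (real n * a) ` L"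
    by (simp add: image_image diag_exp_diag_exp algebra_simps)
  then show ?case
    using Suc assms by simp
qed

lemma exp_decay_in_int_multiples_eq_0:
  fixes t c d :: real
  assumes "c > 0" and "d \<noteq> 0"
    and multiple: "\<And>n::nat. \<exists>k::int. t * exp (- (real n * c)) = d * of_int k"
  shows "t = 0"
proof -
  have "exp (- (real n * c)) = exp (- c) ^ n" for n
    by (simp flip: exp_of_nat_mult)
  moreover have "(\<lambda>n. t * exp (- c) ^ n) \<longlonglongrightarrow> 0"
    using \<open>c > 0\<close> by (intro tendsto_mult_right_zero LIMSEQ_realpow_zero) auto
  ultimately have "(\<lambda>n. \<bar>t * exp (- (real n * c))\<bar>) \<longlonglongrightarrow> 0"
    by (simp add: tendsto_rabs_zero)
  then have "\<forall>\<^sub>F n in sequentially. \<bar>t * exp (- (real n * c))\<bar> < \<bar>d\<bar>"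
    using \<open>d \<noteq> 0\<close> by (intro order_tendstoD(2)) auto
  then obtain n where n: "\<bar>t * exp (- (real n * c))\<bar> < \<bar>d\<bar>"
    by (auto simp: eventually_sequentially)
  obtain k :: int where k: "t * exp (- (real n * c)) = d * of_int k"
    using multiple by blast
  have "\<bar>d\<bar> * \<bar>of_int k\<bar> < \<bar>d\<bar> * 1"
    using n unfolding k by (simp add: abs_mult)
  then have "\<bar>of_int k :: real\<bar> < 1"
    using \<open>d \<noteq> 0\<close> by simp
  then have "k = 0"
    by linarith
  then show "t = 0"
    using k by simp
qed

lemma lattice_coords_nonzero:
  assumes "is_lattice L"
  shows "\<exists>m\<in>L. fst m \<noteq> 0" and "\<exists>m\<in>L. snd m \<noteq> 0"
proof -
  obtain v w where det: "fst v * snd w - snd v * fst w \<noteq> 0"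
    and L: "L = {(of_int m * fst v + of_int n * fst w, of_int m * snd v + of_int n * snd w) | m n :: int. True}"
    using assms unfolding is_lattice_def by blast
  have "v \<in> L"
    unfolding L by (rule CollectI, rule exI[of _ 1], rule exI[of _ 0]) simp
  moreover have "w \<in> L"
    unfolding L by (rule CollectI, rule exI[of _ 0], rule exI[of _ 1]) simp
  moreover have "fst v \<noteq> 0 \<or> fst w \<noteq> 0" "snd v \<noteq> 0 \<or> snd w \<noteq> 0"
    using det by auto
  ultimately show "\<exists>m\<in>L. fst m \<noteq> 0" "\<exists>m\<in>L. snd m \<noteq> 0"
    by blast+
qed

lemma dual_lattice_coords_nonzero:
  assumes L: "is_lattice L" and "a \<noteq> 0" and inv: "diag_exp a ` L = L"
    and u: "u \<in> dual_lattice L" and "u \<noteq> 0"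
  shows "fst u \<noteq> 0 \<and> snd u \<noteq> 0"
proof -
  have "diag_exp \<bar>a\<bar> ` L = L" "diag_exp (- \<bar>a\<bar>) ` L = L"
    using inv diag_exp_image_uminus[OF inv] by (cases "a \<ge> 0"; simp)+
  then have inv_pos: "diag_exp (real n * \<bar>a\<bar>) ` L = L"
    and inv_neg: "diag_exp (real n * - \<bar>a\<bar>) ` L = L" for n
    by (simp_all only: diag_exp_image_nat_mult)
  have pairing: "\<exists>k::int. fst u * exp b * fst m + snd u * exp (- b) * snd m = 2 * pi * of_int k"
    if "m \<in> L" and "diag_exp b ` L = L" for m b
  proof -
    have "diag_exp b m \<in> L"
      using that by blast
    then obtain k :: int where
        "fst u * fst (diag_exp b m) + snd u * snd (diag_exp b m) = 2 * pi * of_int k"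
      using u unfolding dual_lattice_def by blast
    then show ?thesis
      by (auto simp: diag_exp_def mult_ac)
  qed
  have "\<bar>a\<bar> > 0"
    using \<open>a \<noteq> 0\<close> by simp
  obtain m1 m2 where "m1 \<in> L" "fst m1 \<noteq> 0" "m2 \<in> L" "snd m2 \<noteq> 0"
    using lattice_coords_nonzero[OF L] by blast
  have "fst u \<noteq> 0"
  proof
    assume "fst u = 0"
    have "snd u * snd m2 = 0"
    proof (rule exp_decay_in_int_multiples_eq_0[OF \<open>\<bar>a\<bar> > 0\<close>])
      show "\<exists>k::int. snd u * snd m2 * exp (- (real n * \<bar>a\<bar>)) = 2 * pi * of_int k" for n
        using pairing[OF \<open>m2 \<in> L\<close> inv_pos] \<open>fst u = 0\<close> by (simp add: mult_ac)
    qed simp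
    with \<open>fst u = 0\<close> \<open>snd m2 \<noteq> 0\<close> \<open>u \<noteq> 0\<close> show False
      by (simp add: prod_eq_iff)
  qed
  moreover have "snd u \<noteq> 0"
  proof
    assume "snd u = 0"
    have "fst u * fst m1 = 0"
    proof (rule exp_decay_in_int_multiples_eq_0[OF \<open>\<bar>a\<bar> > 0\<close>])
      show "\<exists>k::int. fst u * fst m1 * exp (- (real n * \<bar>a\<bar>)) = 2 * pi * of_int k" for n
        using pairing[OF \<open>m1 \<in> L\<close> inv_neg] \<open>snd u = 0\<close> by (simp add: mult_ac)
    qed simp
    with \<open>snd u = 0\<close> \<open>fst m1 \<noteq> 0\<close> \<open>u \<noteq> 0\<close> show False
      by (simp add: prod_eq_iff)
  qed
  ultimately show ?thesis ..
qed

theorem lemma7: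
  fixes L :: "(real \<times> real) set" and a \<mu> \<mu>' :: real
  assumes "is_lattice L"
    and "a \<noteq> 0"
    and "diag_exp a ` L = L"
    and "(\<mu>, \<mu>') \<in> dual_lattice L"
    and "(\<mu>, \<mu>') \<noteq> (0, 0)"
  shows "(\<forall>lam f. is_eigenpair \<mu> \<mu>' lam f \<longrightarrow> lam \<ge> 2 * \<bar>\<mu> * \<mu>'\<bar>) \<and> 2 * \<bar>\<mu> * \<mu>'\<bar> \<noteq> 0"
proof (intro conjI allI impI)
  fix lam f
  assume "is_eigenpair \<mu> \<mu>' lam f"
  then obtain z where "solv_potential \<mu> \<mu>' z < lam"
    using eigenvalue_exceeds_solv_potential by blast
  then show "lam \<ge> 2 * \<bar>\<mu> * \<mu>'\<bar>"
    using solv_potential_ge[of \<mu> \<mu>' z] by linarith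
next
  show "2 * \<bar>\<mu> * \<mu>'\<bar> \<noteq> 0"
    using dual_lattice_coords_nonzero[OF assms(1-4)] assms(5)
    by (simp add: zero_prod_def)
qed

end
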